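(* Let $X_3\subset\mathbb{A}^2_{\mathbb{Q}}$ be the plane curve defined by $x^2-(2C+16)x+(C^3+8C^2+16C+64)=0$. Then the morphism $\varphi\colon\mathbb{A}^1_{\mathbb{Q}}\to X_3$, $t\mapsto(t^3-t^2+7t+1,\,-t^2-7)$, is the normalization of $X_3$.
   Context: The curve $X_3$ is the zero locus of $\widetilde\delta_3(x,C)=\delta_3(x,C/4)$, where $\delta_3$ is the third multiplier polynomial of the family $z\mapsto z^2+c$; its defining equation is as given. *)

theory Defs
  imports "HOL-Computational_Algebra.Computational_Algebra"
begin

text \<open>Bivariate polynomials in Q[x,C] are represented as rat poly poly:
  outer variable x, inner (coefficient) variable C.\<close>

definition X3_poly :: "rat poly poly" where
  "X3_poly = [: [:64, 16, 8, 1:], [:-16, -2:], 1 :]"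

definition phi_x :: "rat poly" where
  "phi_x = [:1, 7, -1, 1:]"

definition phi_C :: "rat poly" where
  "phi_C = [:-7, 0, -1:]"

definition pullback :: "rat poly poly \<Rightarrow> rat poly" where
  "pullback g = poly (map_poly (\<lambda>c. pcompose c phi_C) g) phi_x"

text \<open>phi : A^1 -> X3 is the normalization of X3 (X3 integral, affine): the pullback
  induces an isomorphism of Q[x,C]/(f) onto its image A in Q[t] (kernel = (f)),
  Frac(A) = Q(t) (t is a quotient of elements of A), and Q[t] is exactly the integral
  closure of A in Q(t): a reduced fraction a/b is integral over A iff b is constant.\<close>
definition is_normalization_X3 :: bool where
  "is_normalization_X3 \<longleftrightarrow>
     (\<forall>g. pullback g = 0 \<longleftrightarrow> X3_poly dvd g) \<and>
     (\<exists>g h. pullback h \<noteq> 0 \<and> pullback h * [:0, 1:] = pullback g) \<and>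
     (\<forall>a b :: rat poly. b \<noteq> 0 \<longrightarrow> coprime a b \<longrightarrow>
        ((\<exists>n cs. a ^ n + (\<Sum>i<n. pullback (cs i) * a ^ i * b ^ (n - i)) = 0)
          \<longleftrightarrow> degree b = 0))"

end

theory Submission
  imports Defs "HOL-Computational_Algebra.Field_as_Ring"
begin

text \<open>Write \<open>s = -t\<^sup>2 - 7\<close> for the \<open>C\<close>-coordinate of \<open>\<phi>\<close>. Every polynomial in \<open>t\<close> is
  uniquely \<open>u(s) + t v(s)\<close>, and \<open>u(s)\<close>, \<open>t v(s)\<close> have even resp. odd degree. Since \<open>X3_poly\<close>
  is monic of degree 2 in \<open>x\<close>, every \<open>g\<close> is congruent to some \<open>r\<^sub>0(C) + r\<^sub>1(C) x\<close>, whose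
  pullback \<open>r\<^sub>0(s) + \<phi>\<^sub>x r\<^sub>1(s)\<close> vanishes only if \<open>r\<^sub>0 = r\<^sub>1 = 0\<close> by this parity argument; so the
  kernel is \<open>(X3_poly)\<close>. The image contains \<open>C\<close> and \<open>C + 8 - x = tC\<close>, so \<open>t\<close> lies in its
  fraction field. As \<open>t\<^sup>2 = -7 - C\<close>, each \<open>p = u(s) + t v(s)\<close> is a root of
  \<open>X\<^sup>2 - 2u(s) X + u(s)\<^sup>2 - t\<^sup>2 v(s)\<^sup>2\<close>, whose coefficients are pullbacks, so \<open>\<rat>[t]\<close> is integral
  over the image; conversely \<open>\<rat>[t]\<close> is integrally closed: a reduced fraction \<open>a/b\<close> satisfying
  a monic equation has \<open>b\<close> dividing \<open>a\<^sup>n\<close>, hence \<open>b\<close> is a unit.\<close>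

lemma monic_division_exists:
  fixes f g :: "'a::comm_ring_1 poly"
  assumes "lead_coeff f = 1"
  shows "\<exists>q r. g = f * q + r \<and> (r = 0 \<or> degree r < degree f)"
proof -
  obtain q r where qr: "pseudo_divmod g f = (q, r)" by fastforce
  have "f \<noteq> 0" using assms by auto
  with qr assms show ?thesis using pseudo_divmod[of f g q r] by auto
qed

lemma coprime_integral_relation_imp_unit:
  fixes a b :: "'a::ring_gcd"
  assumes "coprime a b" and "a ^ n + (\<Sum>i<n. c i * a ^ i * b ^ (n - i)) = 0"
  shows "is_unit b"
proof -
  have "b dvd (\<Sum>i<n. c i * a ^ i * b ^ (n - i))"
    by (intro dvd_sum dvd_mult) (simp add: dvd_power)
  with assms(2) have "b dvd a ^ n"
    by (metis dvd_add_right_iff dvd_0_right add.commute)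
  moreover have "coprime (a ^ n) b" using assms(1) by simp
  ultimately show ?thesis by (meson coprime_common_divisor dvd_refl)
qed

lemma pcompose_even_odd_eq_0_iff:
  fixes p q s x :: "'a::idom poly"
  assumes "even (degree s)" "degree s > 0" "odd (degree x)"
  shows "p \<circ>\<^sub>p s + x * q \<circ>\<^sub>p s = 0 \<longleftrightarrow> p = 0 \<and> q = 0"
proof
  assume sum0: "p \<circ>\<^sub>p s + x * q \<circ>\<^sub>p s = 0"
  have "q = 0"
  proof (rule ccontr)
    assume "q \<noteq> 0"
    then have "x * q \<circ>\<^sub>p s \<noteq> 0" using assms pcompose_eq_0 by fastforce
    then have "odd (degree (x * q \<circ>\<^sub>p s))"
      using assms by (auto simp: degree_mult_eq degree_pcompose)
    moreover have "p \<circ>\<^sub>p s = - (x * q \<circ>\<^sub>p s)" using sum0 by (simp add: eq_neg_iff_add_eq_0)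
    then have "degree (p \<circ>\<^sub>p s) = degree (x * q \<circ>\<^sub>p s)" by simp
    ultimately show False using assms by (metis degree_pcompose even_mult_iff)
  qed
  with sum0 assms show "p = 0 \<and> q = 0" using pcompose_eq_0 by fastforce
qed simp

lemma pcompose_quadratic_decomposition:
  fixes p s :: "'a::field poly"
  assumes "degree s = 2"
  shows "\<exists>u v. p = u \<circ>\<^sub>p s + [:0, 1:] * v \<circ>\<^sub>p s"
proof (induction "degree p" arbitrary: p rule: less_induct)
  case less
  show ?case
  proof (cases "degree p < 2")
    case True
    then have "p = [:coeff p 0:] \<circ>\<^sub>p s + [:0, 1:] * [:coeff p 1:] \<circ>\<^sub>p s"
      by (intro poly_eqI) (auto simp: coeff_pCons coeff_eq_0 split: nat.split)
    then show ?thesis by blast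
  next
    case False
    have "degree (p div s) < degree p"
      using False assms by (intro degree_div_less) auto
    then obtain u v where uv: "p div s = u \<circ>\<^sub>p s + [:0, 1:] * v \<circ>\<^sub>p s"
      using less by blast
    have "degree (p mod s) < 2"
      using degree_mod_less[of s p] assms by (cases "s = 0") auto
    then have rem: "p mod s = [:coeff (p mod s) 0:] + [:0, 1:] * [:coeff (p mod s) 1:]"
      by (intro poly_eqI) (auto simp: coeff_pCons coeff_eq_0 split: nat.split)
    have "p = p div s * s + p mod s" by simp
    also have "\<dots> = pCons (coeff (p mod s) 0) u \<circ>\<^sub>p s + [:0, 1:] * pCons (coeff (p mod s) 1) v \<circ>\<^sub>p s"
      by (subst rem, simp only: uv pcompose_pCons) (simp add: algebra_simps)
    finally show ?thesis by blast
  qed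
qed

lemma homogenized_quadratic_relation:
  fixes u v t k b :: "'a::comm_ring_1"
  assumes "k * b = 1"
  shows "(u + t * v) ^ 2 + (- 2 * k * u) * (u + t * v) * b + k ^ 2 * (u ^ 2 - t ^ 2 * v ^ 2) * b ^ 2 = 0"
proof -
  have "(u + t * v) ^ 2 + (- 2 * k * u) * (u + t * v) * b + k ^ 2 * (u ^ 2 - t ^ 2 * v ^ 2) * b ^ 2
      = (u + t * v) ^ 2 - 2 * u * (u + t * v) * (k * b) + (u ^ 2 - t ^ 2 * v ^ 2) * (k * b) ^ 2"
    by (simp add: algebra_simps power2_eq_square)
  also have "\<dots> = 0" using assms by (simp add: algebra_simps power2_eq_square)
  finally show ?thesis .
qed

lemma pullback_pCons: "pullback (pCons a g) = a \<circ>\<^sub>p phi_C + phi_x * pullback g"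
  by (simp add: pullback_def map_poly_pCons)

lemma pullback_0 [simp]: "pullback 0 = 0"
  by (simp add: pullback_def)

lemma pullback_const: "pullback [:a:] = a \<circ>\<^sub>p phi_C"
  by (simp add: pullback_pCons)

lemma pullback_add: "pullback (g + h) = pullback g + pullback h"
proof (induction g arbitrary: h)
  case (pCons a g)
  then show ?case
    by (cases h) (simp add: pullback_pCons pcompose_add algebra_simps)
qed simp

lemma pullback_smult: "pullback (smult a g) = a \<circ>\<^sub>p phi_C * pullback g"
  by (induction g) (simp_all add: pullback_pCons pcompose_mult algebra_simps)

lemma pullback_mult: "pullback (g * h) = pullback g * pullback h"
  by (induction g) (simp_all add: mult_pCons_left pullback_add pullback_smult pullback_pCons algebra_simps)

lemma degree_phi_C: "degree phi_C = 2"
  by (simp add: phi_C_def)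

lemma degree_phi_x: "degree phi_x = 3"
  by (simp add: phi_x_def)

lemma pullback_X3_poly: "pullback X3_poly = 0"
  by (simp add: X3_poly_def pullback_pCons phi_x_def phi_C_def pcompose_pCons pcompose_1 pcompose_uminus algebra_simps)

lemma pullback_eq_0_iff: "pullback g = 0 \<longleftrightarrow> X3_poly dvd g"
proof
  assume "pullback g = 0"
  obtain q r where g: "g = X3_poly * q + r" and "r = 0 \<or> degree r < 2"
    using monic_division_exists[of X3_poly g] by (auto simp: X3_poly_def)
  then have r: "r = pCons (coeff r 0) (pCons (coeff r 1) 0)"
    by (intro poly_eqI) (auto simp: coeff_pCons coeff_eq_0 split: nat.split)
  have "pullback r = 0"
    using \<open>pullback g = 0\<close> by (simp add: g pullback_add pullback_mult pullback_X3_poly)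
  then have "coeff r 0 \<circ>\<^sub>p phi_C + phi_x * coeff r 1 \<circ>\<^sub>p phi_C = 0"
    by (subst (asm) r) (simp add: pullback_pCons)
  then have "r = 0"
    by (subst r) (simp add: pcompose_even_odd_eq_0_iff degree_phi_C degree_phi_x)
  then show "X3_poly dvd g" by (simp add: g)
qed (auto simp: pullback_mult pullback_X3_poly)

lemma pullback_t_quotient:
  "pullback [:[:0, 1:]:] \<noteq> 0 \<and> pullback [:[:0, 1:]:] * [:0, 1:] = pullback [:[:8, 1:], -1:]"
  by (simp add: pullback_pCons phi_x_def phi_C_def pcompose_pCons pcompose_1 pcompose_uminus algebra_simps)

lemma integral_over_pullback_if_degree_0:
  fixes a b :: "rat poly"
  assumes "b \<noteq> 0" and "degree b = 0"
  shows "\<exists>n cs. a ^ n + (\<Sum>i<n. pullback (cs i) * a ^ i * b ^ (n - i)) = 0"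
proof -
  obtain c where b: "b = [:c:]" and "c \<noteq> 0"
    using assms by (metis degree_eq_zeroE pCons_eq_0_iff)
  obtain u v where a: "a = u \<circ>\<^sub>p phi_C + [:0, 1:] * v \<circ>\<^sub>p phi_C"
    using pcompose_quadratic_decomposition[OF degree_phi_C] by blast
  define k where "k = [:1 / c:]"
  define cs where "cs i = (if i = 0 then [:k ^ 2 * (u ^ 2 - [:-7, -1:] * v ^ 2):] else [:- 2 * k * u:])"
    for i :: nat
  have t_squared: "[:-7, -1:] \<circ>\<^sub>p phi_C = [:0, 1:] ^ 2"
    by (simp add: phi_C_def pcompose_pCons power2_eq_square)
  have "pullback (cs 0) = k ^ 2 * ((u \<circ>\<^sub>p phi_C) ^ 2 - [:0, 1:] ^ 2 * (v \<circ>\<^sub>p phi_C) ^ 2)"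
    by (simp only: cs_def refl if_True k_def pullback_const pcompose_mult pcompose_diff pcompose_const
        power2_eq_square t_squared)
  moreover have "pullback (cs 1) = - 2 * k * u \<circ>\<^sub>p phi_C"
    unfolding cs_def k_def
    by (simp only: One_nat_def nat.distinct if_False pullback_const
        pcompose_mult pcompose_uminus pcompose_const numeral_poly[where 'a=rat])
  moreover have "k * b = 1"
    using \<open>c \<noteq> 0\<close> by (simp add: k_def b)
  ultimately have "a ^ 2 + pullback (cs 1) * a * b + pullback (cs 0) * b ^ 2 = 0"
    unfolding a by (simp only: homogenized_quadratic_relation)
  then have "a ^ 2 + (\<Sum>i<2. pullback (cs i) * a ^ i * b ^ (2 - i)) = 0"
    by (simp add: numeral_2_eq_2 algebra_simps)
  then show ?thesis by blast
qed

lemma integral_over_pullback_imp_degree_0: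
  fixes a b :: "rat poly"
  assumes "b \<noteq> 0" and "coprime a b"
    and "a ^ n + (\<Sum>i<n. pullback (cs i) * a ^ i * b ^ (n - i)) = 0"
  shows "degree b = 0"
  using coprime_integral_relation_imp_unit[OF assms(2,3)] is_unit_iff_degree[OF assms(1)] by simp

theorem lemma2p6:
  shows "is_normalization_X3"
  unfolding is_normalization_X3_def
proof (intro conjI allI impI)
  show "\<exists>g h. pullback h \<noteq> 0 \<and> pullback h * [:0, 1:] = pullback g"
    using pullback_t_quotient by blast
next
  fix a b :: "rat poly"
  assume "b \<noteq> 0" and "coprime a b"
  then show "(\<exists>n cs. a ^ n + (\<Sum>i<n. pullback (cs i) * a ^ i * b ^ (n - i)) = 0) \<longleftrightarrow> degree b = 0"
    using integral_over_pullback_imp_degree_0 integral_over_pullback_if_degree_0 by blast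
qed (rule pullback_eq_0_iff)

end
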